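(* Let $m$ be the number of registers of a HyperLogLog sketch into which $n$ distinct elements have been inserted, let $\beta\in(0,1)$, and suppose $n>2m^2/\beta$. Let $B=\log_2\frac{n}{m}$ and $\Delta=\log_2\frac{2m}{\beta}$. Then with probability at least $1-\beta$, all register values $M[j]$, $j\in[m]$, lie in the interval $(B-\Delta,B+\Delta)$, so that all register values can be represented as offsets from the base value $B$ using at most $\lceil \log_2\log_2\frac{2m}{\beta}\rceil+1=O(\log\log m)$ bits each.
   Context: HyperLogLog model: each of $n$ distinct elements $y_i$ is assigned a register index $f(y_i)$ uniform in $[m]=\{1,\dots,m\}$ and a value $\rho_i$ with $\Pr[\rho_i=k]=2^{-k}$, $k=1,2,\dots$ (the position of the first one-bit of a uniformly random hash value), all independent; register $M[j]$ is the maximum of $\rho_i$ over elements with $f(y_i)=j$ (0 if none), so $\Pr[M[j]\le k]=(1-\frac{1}{m2^k})^n$ for integers $k\ge 0$. Convention: register values are treated as real-valued continuous random variables whose individual distribution function is $\Pr[M[j]\le t]=\Pr[M[j]<t]=(1-\frac{1}{m2^t})^n$ for real $t$. *)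

theory Defs
  imports "HOL-Probability.Probability"
begin

text \<open>Each element i is assigned a pair
  (f i, rho i): register index f i uniform on {1..m}, and rho i with Pr[rho i = k] = 2^-k
  for k >= 1 (rho = 1 + Geometric(1/2) counting failures).\<close>

definition rho_pmf :: "nat pmf" where
  "rho_pmf = map_pmf Suc (geometric_pmf (1/2))"

definition hll_pmf :: "nat \<Rightarrow> nat \<Rightarrow> (nat \<Rightarrow> nat \<times> nat) pmf" where
  "hll_pmf m n = Pi_pmf {..<n} (0, 0) (\<lambda>_. pair_pmf (pmf_of_set {1..m}) rho_pmf)"

definition register :: "nat \<Rightarrow> nat \<Rightarrow> (nat \<Rightarrow> nat \<times> nat) \<Rightarrow> nat" where
  "register n j \<omega> = Max (insert 0 {snd (\<omega> i) | i. i < n \<and> fst (\<omega> i) = j})"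

end

(* Some register reaches B + Delta only if some element gets a rho above K, the largest integer
   below B + Delta; since 2^-K <= beta/n, this has probability 1 - (1 - 2^-K)^n <= beta - beta^2/6
   by the cubic truncation of the binomial expansion. Register j stays at or below
   L = floor (B - Delta) only if every element hashed to j has rho <= L, which has probability
   (1 - 2^-L/m)^n <= exp (-2m/beta) <= beta^2/(6m). The slack beta^2/6 is needed because rounding
   B + Delta down to an integer costs a factor 2 in the plain union bound over the registers.
   An open interval of length 2 Delta contains at most ceiling (2 Delta) <= 2^(ceiling (log2 Delta) + 1)
   integers. *)

theory Submission
  imports Defs
begin

lemma one_minus_power_ge_cubic_taylor:
  fixes y :: real
  assumes "0 \<le> y" "y \<le> 1"
  shows "1 - real n * y + real n * (real n - 1) / 2 * y^2
           - real n * (real n - 1) * (real n - 2) / 6 * y^3 \<le> (1 - y)^n"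
proof (induction n)
  case 0 then show ?case by simp
next
  case (Suc n)
  have "(1 - y) * (1 - real n * y + real n * (real n - 1) / 2 * y^2
           - real n * (real n - 1) * (real n - 2) / 6 * y^3)
      = (1 - real (Suc n) * y + real (Suc n) * (real (Suc n) - 1) / 2 * y^2
           - real (Suc n) * (real (Suc n) - 1) * (real (Suc n) - 2) / 6 * y^3)
        + real n * (real n - 1) * (real n - 2) / 6 * y^4"
    by (simp add: field_simps power2_eq_square power3_eq_cube power4_eq_xxxx)
  moreover have "0 \<le> real n * (real n - 1) * (real n - 2) / 6 * y^4"
    using assms by (cases "n \<ge> 2") (auto simp: not_le less_2_cases_iff)
  moreover have "(1 - y) * (1 - real n * y + real n * (real n - 1) / 2 * y^2
           - real n * (real n - 1) * (real n - 2) / 6 * y^3) \<le> (1 - y) * (1 - y)^n"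
    using Suc assms by (intro mult_left_mono) auto
  ultimately show ?case by simp
qed

lemma one_minus_power_ge_quadratic:
  fixes \<beta> p :: real
  assumes "0 \<le> \<beta>" "\<beta> \<le> 1" "n \<ge> 2" "p \<le> \<beta> / n"
  shows "1 - \<beta> + \<beta>^2/6 \<le> (1 - p)^n"
proof -
  have n_ge_2: "real n \<ge> 2" using assms by simp
  have "\<beta>^3 \<le> \<beta>^2" using assms by (simp add: power_decreasing)
  then have "(real n - 1) * (real n - 2) * \<beta>^3 \<le> (real n - 1) * (real n - 2) * \<beta>^2"
    using n_ge_2 by (intro mult_left_mono) auto
  moreover have "real n^2 * \<beta>^2 \<le> (2 * real n^2 - 2) * \<beta>^2"
    using mult_mono[OF n_ge_2 n_ge_2] by (intro mult_right_mono) (auto simp: power2_eq_square)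
  moreover have "(2 * real n^2 - 2) * \<beta>^2 = 3 * real n * (real n - 1) * \<beta>^2 - (real n - 1) * (real n - 2) * \<beta>^2"
    by (simp add: algebra_simps power2_eq_square)
  ultimately have "real n^2 * \<beta>^2 \<le> 3 * real n * (real n - 1) * \<beta>^2 - (real n - 1) * (real n - 2) * \<beta>^3"
    by linarith
  then have "\<beta>^2 / 6 \<le> (3 * real n * (real n - 1) * \<beta>^2 - (real n - 1) * (real n - 2) * \<beta>^3) / (6 * real n^2)"
    using n_ge_2 by (simp add: field_simps)
  also have "\<dots> = real n * (real n - 1) / 2 * (\<beta> / n)^2 - real n * (real n - 1) * (real n - 2) / 6 * (\<beta> / n)^3"
    using n_ge_2 by (simp add: field_simps power2_eq_square power3_eq_cube)
  finally have "1 - \<beta> + \<beta>^2/6 \<le> 1 - real n * (\<beta> / n) + real n * (real n - 1) / 2 * (\<beta> / n)^2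
           - real n * (real n - 1) * (real n - 2) / 6 * (\<beta> / n)^3"
    using n_ge_2 by simp
  also have "\<dots> \<le> (1 - \<beta> / n)^n"
    using assms n_ge_2 by (intro one_minus_power_ge_cubic_taylor) auto
  also have "\<dots> \<le> (1 - p)^n"
    using assms n_ge_2 by (intro power_mono) auto
  finally show ?thesis .
qed

lemma mult_exp_neg_le:
  fixes x \<beta> :: real
  assumes "1 \<le> x" "0 < \<beta>"
  shows "x * exp (- (2 * x / \<beta>)) \<le> \<beta>^2 / 6"
proof -
  define s where "s = x / \<beta>"
  have s: "0 < s" using assms by (simp add: s_def)
  have "5/2 * s \<le> exp 1 * s"
    using exp_lower_Taylor_quadratic[of 1] s by (intro mult_right_mono) auto
  also have "exp 1 * s \<le> exp s"
    using exp_ge_add_one_self[of "s - 1"] by (simp add: exp_diff field_simps)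
  finally have "5/2 * s \<le> exp s" .
  then have "(5/2 * s)^2 \<le> exp s ^ 2"
    using s by (intro power_mono) auto
  then have "25/4 * s^2 \<le> exp (2 * s)"
    by (simp add: power2_eq_square exp_add[symmetric])
  moreover have "6 * x \<le> 25/4 * x^2"
    using mult_left_mono[of 1 x x] assms by (simp add: power2_eq_square)
  then have "6 * x / \<beta>^2 \<le> 25/4 * s^2"
    using assms by (simp add: s_def field_simps)
  ultimately have "x / exp (2 * s) \<le> x / (6 * x / \<beta>^2)"
    using assms by (intro divide_left_mono) auto
  then show ?thesis
    using assms by (simp add: s_def exp_minus field_simps)
qed

lemma mult_one_minus_power_le:
  fixes x \<beta> q :: real
  assumes "1 \<le> x" "0 < \<beta>" "0 \<le> q" "q \<le> 1" "2 * x / \<beta> \<le> n * q"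
  shows "x * (1 - q)^n \<le> \<beta>^2 / 6"
proof -
  have "0 < real n * q"
    using assms by (smt (verit) divide_pos_pos)
  moreover have "real n * q \<le> real n"
    using mult_left_mono[of q 1 "real n"] assms by simp
  ultimately have "(1 - q)^n \<le> exp (- (n * q))"
    using exp_ge_one_minus_x_over_n_power_n[of "n * q" n] by (simp add: zero_less_mult_iff)
  also have "\<dots> \<le> exp (- (2 * x / \<beta>))"
    using assms by simp
  finally have "x * (1 - q)^n \<le> x * exp (- (2 * x / \<beta>))"
    using assms by (intro mult_left_mono) auto
  also have "\<dots> \<le> \<beta>^2 / 6"
    using mult_exp_neg_le assms by blast
  finally show ?thesis .
qed

lemma prob_rho_atMost: "measure_pmf.prob rho_pmf {..k} = 1 - (1/2::real)^k"
proof -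
  have "Suc -` {..k} = {..<k}"
    by auto
  then have "measure_pmf.prob rho_pmf {..k} = measure_pmf.prob (geometric_pmf (1/2)) {..<k}"
    unfolding rho_pmf_def by simp
  also have "\<dots> = (\<Sum>i<k. (1/2::real)^i * (1/2))"
    by (subst measure_measure_pmf_finite) simp_all
  also have "\<dots> = 1 - (1/2::real)^k"
    by (induction k) simp_all
  finally show ?thesis .
qed

lemma prob_rho_greaterThan: "measure_pmf.prob rho_pmf {k<..} = (1/2::real)^k"
  using measure_pmf.prob_compl[of "{..k}" rho_pmf] prob_rho_atMost[of k]
  by (simp add: Compl_eq_Diff_UNIV[symmetric])

lemma prob_pair_rho_atMost:
  "measure_pmf.prob (pair_pmf (pmf_of_set {1..m::nat}) rho_pmf) (UNIV \<times> {..k}) = 1 - (1/2::real)^k"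
  by (subst measure_pmf_prob_product) (auto simp: prob_rho_atMost)

lemma prob_pair_hashed_to_imp_rho_atMost:
  assumes "j \<in> {1..m}"
  shows "measure_pmf.prob (pair_pmf (pmf_of_set {1..m}) rho_pmf) {p. fst p = j \<longrightarrow> snd p \<le> L}
           = 1 - (1/2::real)^L / real m"
proof -
  let ?P = "pair_pmf (pmf_of_set {1..m}) rho_pmf"
  have "measure_pmf.prob ?P ({j} \<times> {L<..}) = measure_pmf.prob (pmf_of_set {1..m}) {j} * (1/2)^L"
    by (subst measure_pmf_prob_product) (auto simp: prob_rho_greaterThan)
  also have "\<dots> = (1/2)^L / real m"
    using assms by (subst measure_pmf_of_set) auto
  moreover have "{p. fst p = j \<longrightarrow> snd p \<le> L} = UNIV - {j} \<times> {L<..}"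
    by auto
  ultimately show ?thesis
    using measure_pmf.prob_compl[of "{j} \<times> {L<..}" ?P] by simp
qed

lemma prob_hll_pmf_forall:
  "measure_pmf.prob (hll_pmf m n) {\<omega>. \<forall>i<n. \<omega> i \<in> S}
     = measure_pmf.prob (pair_pmf (pmf_of_set {1..m}) rho_pmf) S ^ n"
proof -
  have "{\<omega>. \<forall>i<n. \<omega> i \<in> S} = Pi {..<n} (\<lambda>_. S)"
    by (auto simp: Pi_def)
  then show ?thesis
    unfolding hll_pmf_def by (simp add: measure_Pi_pmf_Pi)
qed

lemma register_le_iff:
  "register n j \<omega> \<le> L \<longleftrightarrow> (\<forall>i<n. fst (\<omega> i) = j \<longrightarrow> snd (\<omega> i) \<le> L)"
proof -
  have "{snd (\<omega> i) | i. i < n \<and> fst (\<omega> i) = j} = (\<lambda>i. snd (\<omega> i)) ` {i. i < n \<and> fst (\<omega> i) = j}"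
    by auto
  then have "finite {snd (\<omega> i) | i. i < n \<and> fst (\<omega> i) = j}"
    by simp
  then show ?thesis
    unfolding register_def by auto
qed

lemma prob_registers_between:
  "(1 - (1/2)^K)^n - real m * (1 - (1/2)^L / real m)^n
     \<le> measure_pmf.prob (hll_pmf m n) {\<omega>. \<forall>j\<in>{1..m}. L < register n j \<omega> \<and> register n j \<omega> \<le> K}"
proof -
  let ?P = "hll_pmf m n"
  define no_overflow where "no_overflow = {\<omega>. \<forall>i<n. \<omega> i \<in> (UNIV :: nat set) \<times> {..K}}"
  define low where "low j = {\<omega>. \<forall>i<n. \<omega> i \<in> {p. fst p = j \<longrightarrow> snd p \<le> L}}" for j :: nat
  have "no_overflow - (\<Union>j\<in>{1..m}. low j)
          \<subseteq> {\<omega>. \<forall>j\<in>{1..m}. L < register n j \<omega> \<and> register n j \<omega> \<le> K}"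
    by (auto simp: no_overflow_def low_def register_le_iff not_le[symmetric])
  then have "measure_pmf.prob ?P (no_overflow - (\<Union>j\<in>{1..m}. low j))
      \<le> measure_pmf.prob ?P {\<omega>. \<forall>j\<in>{1..m}. L < register n j \<omega> \<and> register n j \<omega> \<le> K}"
    by (intro measure_pmf.finite_measure_mono) auto
  moreover have "measure_pmf.prob ?P no_overflow - measure_pmf.prob ?P (\<Union>j\<in>{1..m}. low j)
      \<le> measure_pmf.prob ?P (no_overflow - (\<Union>j\<in>{1..m}. low j))"
    by (intro measure_diff_le_measure_setdiff) (auto simp: measure_pmf.fmeasurable_eq_sets)
  moreover have "measure_pmf.prob ?P (\<Union>j\<in>{1..m}. low j) \<le> (\<Sum>j\<in>{1..m}. measure_pmf.prob ?P (low j))"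
    by (intro measure_pmf.finite_measure_subadditive_finite) auto
  moreover have "measure_pmf.prob ?P (low j) = (1 - (1/2)^L / real m)^n" if "j \<in> {1..m}" for j
    unfolding low_def prob_hll_pmf_forall prob_pair_hashed_to_imp_rho_atMost[OF that] ..
  then have "(\<Sum>j\<in>{1..m}. measure_pmf.prob ?P (low j)) = real m * (1 - (1/2)^L / real m)^n"
    by simp
  moreover have "measure_pmf.prob ?P no_overflow = (1 - (1/2)^K)^n"
    unfolding no_overflow_def prob_hll_pmf_forall prob_pair_rho_atMost ..
  ultimately show ?thesis
    by linarith
qed

lemma prob_registers_in_interval:
  fixes a b \<beta> :: real
  assumes "0 < \<beta>" "\<beta> \<le> 1" "n \<ge> 2" "m > 0" "0 \<le> a"
    and "2 powr a \<le> real n * \<beta> / (2 * real m^2)" and "2 * real n / \<beta> \<le> 2 powr b"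
  shows "1 - \<beta> \<le> measure_pmf.prob (hll_pmf m n)
           {\<omega>. \<forall>j\<in>{1..m}. a < real (register n j \<omega>) \<and> real (register n j \<omega>) < b}"
proof -
  define K where "K = nat \<lceil>b\<rceil> - 1"
  define L where "L = nat \<lfloor>a\<rfloor>"
  have "2 powr 1 < 2 * real n / \<beta>"
    using assms by (simp add: field_simps)
  also have "\<dots> \<le> 2 powr b"
    using assms by simp
  finally have "1 < b"
    using powr_less_cancel_iff[of "2::real" 1 b] by simp
  then have K: "b - 1 \<le> real K" "real K < b" and L: "real L \<le> a" "a < real L + 1"
    using assms unfolding K_def L_def by linarith+
  have "real n / \<beta> \<le> 2 powr (b - 1)"
    using assms by (simp add: powr_diff field_simps)
  also have "\<dots> \<le> 2 ^ K"
    using K by (simp flip: powr_realpow)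
  finally have "(1/2)^K \<le> \<beta> / real n"
    using assms by (simp add: field_simps)
  then have overflow: "1 - \<beta> + \<beta>^2/6 \<le> (1 - (1/2)^K)^n"
    using assms by (intro one_minus_power_ge_quadratic) auto
  have "2 ^ L \<le> real n * \<beta> / (2 * real m^2)"
    using L assms by (smt (verit) powr_realpow powr_mono)
  then have "2 * real m / \<beta> \<le> real n * ((1/2)^L / real m)"
    using assms by (simp add: field_simps power2_eq_square)
  moreover have "1 * 1 \<le> real m * 2^L"
    using assms by (intro mult_mono) auto
  ultimately have underflow: "real m * (1 - (1/2)^L / real m)^n \<le> \<beta>^2/6"
    using assms by (intro mult_one_minus_power_le) (auto simp: field_simps)
  have "{\<omega>. \<forall>j\<in>{1..m}. L < register n j \<omega> \<and> register n j \<omega> \<le> K}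
          \<subseteq> {\<omega>. \<forall>j\<in>{1..m}. a < real (register n j \<omega>) \<and> real (register n j \<omega>) < b}"
    using K L by force
  then have "measure_pmf.prob (hll_pmf m n) {\<omega>. \<forall>j\<in>{1..m}. L < register n j \<omega> \<and> register n j \<omega> \<le> K}
      \<le> measure_pmf.prob (hll_pmf m n) {\<omega>. \<forall>j\<in>{1..m}. a < real (register n j \<omega>) \<and> real (register n j \<omega>) < b}"
    by (intro measure_pmf.finite_measure_mono) auto
  then show ?thesis
    using prob_registers_between[of K n m L] overflow underflow by linarith
qed

lemma card_int_between_le:
  fixes a b :: real
  shows "card {k::int. a < of_int k \<and> of_int k < b} \<le> nat \<lceil>b - a\<rceil>"
proof -
  have "{k::int. a < of_int k \<and> of_int k < b} \<subseteq> {\<lfloor>a\<rfloor> + 1 .. \<lceil>b\<rceil> - 1}"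
    by (auto simp: add1_zle_eq floor_less_iff less_ceiling_iff)
  then have "card {k::int. a < of_int k \<and> of_int k < b} \<le> nat (\<lceil>b\<rceil> - \<lfloor>a\<rfloor> - 1)"
    using card_mono[of "{\<lfloor>a\<rfloor> + 1 .. \<lceil>b\<rceil> - 1}"] by simp
  also have "\<lceil>b\<rceil> - \<lfloor>a\<rfloor> - 1 \<le> \<lceil>b - a\<rceil>"
  proof -
    have "of_int \<lceil>b\<rceil> < b + 1" "a < of_int \<lfloor>a\<rfloor> + 1" "b - a \<le> of_int \<lceil>b - a\<rceil>"
      by linarith+
    then have "of_int (\<lceil>b\<rceil> - \<lfloor>a\<rfloor> - 1) < (of_int (\<lceil>b - a\<rceil> + 1) :: real)"
      by (simp only: of_int_add of_int_diff of_int_1)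
    then show ?thesis
      by linarith
  qed
  finally show ?thesis by simp
qed

theorem theorem3p4:
  fixes m n :: nat and \<beta> :: real
  assumes "m > 0" and "0 < \<beta>" and "\<beta> < 1"
    and "real n > 2 * (real m)^2 / \<beta>"
  defines "B \<equiv> log 2 (real n / real m)" and "\<Delta> \<equiv> log 2 (2 * real m / \<beta>)"
  shows "measure_pmf.prob (hll_pmf m n)
           {\<omega>. \<forall>j\<in>{1..m}. B - \<Delta> < real (register n j \<omega>) \<and> real (register n j \<omega>) < B + \<Delta>}
         \<ge> 1 - \<beta> \<and>
         card {k::int. B - \<Delta> < real_of_int k \<and> real_of_int k < B + \<Delta>}
         \<le> 2 ^ (nat \<lceil>log 2 (log 2 (2 * real m / \<beta>))\<rceil> + 1)"
proof
  have m_ge_1: "1 \<le> real m"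
    using assms by simp
  have "2 \<le> 2 * (real m)^2 / \<beta>"
    using assms m_ge_1 by (simp add: field_simps power2_eq_square mult_mono)
  then have "n \<ge> 2"
    using assms by linarith
  have "2 powr B = real n / real m" "2 powr \<Delta> = 2 * real m / \<beta>"
    using assms \<open>n \<ge> 2\<close> unfolding B_def \<Delta>_def by simp_all
  then have powr_upper: "2 powr (B + \<Delta>) = 2 * real n / \<beta>"
    and powr_lower: "2 powr (B - \<Delta>) = real n * \<beta> / (2 * real m^2)"
    using m_ge_1 by (simp_all add: powr_add powr_diff power2_eq_square)
  have "2 powr 0 < 2 powr (B - \<Delta>)"
    using assms m_ge_1 unfolding powr_lower by (simp add: field_simps)
  then have "0 \<le> B - \<Delta>"
    using powr_less_cancel_iff[of "2::real" 0 "B - \<Delta>"] by simp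
  then show "1 - \<beta> \<le> measure_pmf.prob (hll_pmf m n)
           {\<omega>. \<forall>j\<in>{1..m}. B - \<Delta> < real (register n j \<omega>) \<and> real (register n j \<omega>) < B + \<Delta>}"
    using assms \<open>n \<ge> 2\<close> powr_upper powr_lower by (intro prob_registers_in_interval) auto
  have "card {k::int. B - \<Delta> < real_of_int k \<and> real_of_int k < B + \<Delta>} \<le> nat \<lceil>2 * \<Delta>\<rceil>"
    using card_int_between_le[of "B - \<Delta>" "B + \<Delta>"] by simp
  also have "\<dots> \<le> 2 ^ (nat \<lceil>log 2 \<Delta>\<rceil> + 1)"
    using power_of_nat_log_ge[of 2 \<Delta>] by (simp add: ceiling_le_iff nat_le_iff)
  finally show "card {k::int. B - \<Delta> < real_of_int k \<and> real_of_int k < B + \<Delta>}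
         \<le> 2 ^ (nat \<lceil>log 2 (log 2 (2 * real m / \<beta>))\<rceil> + 1)"
    unfolding \<Delta>_def .
qed

end
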